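(* For $n\ge1$, let $X_n$ be the degree of asymmetry of a uniformly random composition of $n$. Then $X_n$ converges to a normal distribution (i.e. $(X_n-\mathbb{E}X_n)/\sqrt{\mathbb{V}X_n}$ converges in distribution to a standard normal), and $$\mathbb{E}X_n=\frac{n}{6}+O(1),\qquad \mathbb{V}X_n=\frac{5n}{108}+O(1).$$
   Context: A composition of $n$ is a sequence $(a_1,\dots,a_m)$ of positive integers summing to $n$. Its degree of asymmetry is $\mathrm{da}=|\{i: 1\le i\le m/2,\ a_i\neq a_{m+1-i}\}|$. *)

theory Defs
  imports "HOL-Probability.Probability" "HOL-Library.Landau_Symbols"
begin

definition compositions :: "nat \<Rightarrow> nat list set" where
  "compositions n = {xs. (\<forall>x\<in>set xs. 0 < x) \<and> sum_list xs = n}"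

text \<open>Degree of asymmetry: number of i with 1 \<le> i \<le> m/2 and a_i \<noteq> a_(m+1-i)
  (1-based indexing; list index i-1 and m-i).\<close>
definition da :: "nat list \<Rightarrow> nat" where
  "da xs = card {i. 1 \<le> i \<and> 2 * i \<le> length xs \<and> xs ! (i - 1) \<noteq> xs ! (length xs - i)}"

definition comp_pmf :: "nat \<Rightarrow> nat list pmf" where
  "comp_pmf n = pmf_of_set (compositions n)"

definition EX_da :: "nat \<Rightarrow> real" where
  "EX_da n = measure_pmf.expectation (comp_pmf n) (\<lambda>c. real (da c))"

definition VX_da :: "nat \<Rightarrow> real" where
  "VX_da n = measure_pmf.variance (comp_pmf n) (\<lambda>c. real (da c))"

end

theory Submission
  imports Defs
begin

text \<open>
  Removing the outer parts \<open>a\<close> and \<open>b\<close> of a composition \<open>a # xs @ [b]\<close> of \<open>n\<close> leaves a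
  composition \<open>xs\<close> of \<open>n - a - b\<close> and changes \<open>da\<close> by \<open>[a \<noteq> b]\<close>. Summing over the outer
  parts, for every weight \<open>g\<close> the sums of \<open>g (da c)\<close> over the compositions \<open>c\<close> of \<open>n\<close> satisfy
  one and the same linear recurrence of order three. For \<open>g j = j\<^sup>k\<close> it yields the mean and the
  variance in closed form; for \<open>g j = exp (i \<theta> j)\<close> it is a recurrence with constant coefficients
  for the characteristic function, whose dominant characteristic root is
  \<open>exp (i \<theta> / 6 - 5 \<theta>\<^sup>2 / 216) + O(\<theta>\<^sup>3)\<close>. A perturbation estimate then shows that the
  characteristic function of the normalised \<open>X\<^sub>n\<close> tends to that of the standard normal
  distribution, and Levy's continuity theorem applies.
\<close>

section \<open>Peeling off the outer parts of a composition\<close>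

lemma length_le_sum_list:
  "(\<And>x. x \<in> set xs \<Longrightarrow> 0 < x) \<Longrightarrow> length xs \<le> sum_list (xs :: nat list)"
  by (induction xs) fastforce+

lemma finite_compositions: "finite (compositions n)"
proof (rule finite_subset)
  show "compositions n \<subseteq> {xs. set xs \<subseteq> {..n} \<and> length xs \<le> n}"
    unfolding compositions_def using length_le_sum_list member_le_sum_list by fastforce
  show "finite {xs. set xs \<subseteq> {..n} \<and> length xs \<le> n}"
    by (rule finite_lists_length_le) simp
qed

lemma compositions_not_empty: "compositions n \<noteq> {}"
proof -
  have "(if n = 0 then [] else [n]) \<in> compositions n"
    by (simp add: compositions_def)
  then show ?thesis by blast
qed

lemma da_eq_length_filter:
  "da xs = length (filter (\<lambda>(x, y). x \<noteq> y)
              (zip (take (length xs div 2) xs) (take (length xs div 2) (rev xs))))"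
proof -
  let ?h = "length xs div 2"
  have "length (filter (\<lambda>(x, y). x \<noteq> y) (zip (take ?h xs) (take ?h (rev xs))))
      = card {i. i < ?h \<and> xs ! i \<noteq> xs ! (length xs - Suc i)}"
    by (auto simp: length_filter_conv_card rev_nth intro!: arg_cong[where f = card])
  also have "\<dots> = card (Suc ` {i. i < ?h \<and> xs ! i \<noteq> xs ! (length xs - Suc i)})"
    by (simp add: card_image)
  also have "Suc ` {i. i < ?h \<and> xs ! i \<noteq> xs ! (length xs - Suc i)}
      = {i. 1 \<le> i \<and> 2 * i \<le> length xs \<and> xs ! (i - 1) \<noteq> xs ! (length xs - i)}"
  proof (intro set_eqI iffI)
    fix i assume "i \<in> {i. 1 \<le> i \<and> 2 * i \<le> length xs \<and> xs ! (i - 1) \<noteq> xs ! (length xs - i)}"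
    then show "i \<in> Suc ` {i. i < ?h \<and> xs ! i \<noteq> xs ! (length xs - Suc i)}"
      by (intro image_eqI[where x = "i - 1"]) auto
  qed auto
  finally show ?thesis
    unfolding da_def by simp
qed

lemma da_Nil [simp]: "da [] = 0"
  by (simp add: da_def)

lemma da_singleton [simp]: "da [x] = 0"
  by (simp add: da_eq_length_filter)

lemma da_Cons_snoc: "da (a # xs @ [b]) = of_bool (a \<noteq> b) + da xs"
  by (simp add: da_eq_length_filter take_append)

definition outer_pairs :: "nat \<Rightarrow> (nat \<times> nat) set" where
  "outer_pairs n = {(a, b). 0 < a \<and> 0 < b \<and> a + b \<le> n}"

lemma finite_outer_pairs: "finite (outer_pairs n)"
  by (rule finite_subset[of _ "{..n} \<times> {..n}"]) (auto simp: outer_pairs_def)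

lemma compositions_outer_parts:
  "compositions n = {if n = 0 then [] else [n]} \<union>
     (\<lambda>((a, b), xs). a # xs @ [b]) ` Sigma (outer_pairs n) (\<lambda>(a, b). compositions (n - a - b))"
proof (intro set_eqI iffI)
  fix c assume c: "c \<in> compositions n"
  show "c \<in> {if n = 0 then [] else [n]} \<union>
     (\<lambda>((a, b), xs). a # xs @ [b]) ` Sigma (outer_pairs n) (\<lambda>(a, b). compositions (n - a - b))"
  proof (cases "length c < 2")
    case True
    then have "c = [] \<or> (\<exists>x. c = [x])"
      by (cases c) auto
    then show ?thesis
      using c by (auto simp: compositions_def)
  next
    case False
    then obtain a rest where "c = a # rest" "rest \<noteq> []"
      by (cases c) auto
    then obtain xs b where c_eq: "c = a # xs @ [b]"
      by (cases rest rule: rev_exhaust) auto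
    then have "((a, b), xs) \<in> Sigma (outer_pairs n) (\<lambda>(a, b). compositions (n - a - b))"
      using c by (auto simp: compositions_def outer_pairs_def)
    then show ?thesis
      unfolding c_eq by (intro UnI2 image_eqI[where x = "((a, b), xs)"]) auto
  qed
qed (auto simp: compositions_def outer_pairs_def split: if_splits)

lemma sum_compositions_outer_parts:
  "(\<Sum>c\<in>compositions n. f c) = f (if n = 0 then [] else [n]) +
     (\<Sum>(a, b)\<in>outer_pairs n. \<Sum>xs\<in>compositions (n - a - b). f (a # xs @ [b]))"
proof -
  define S where "S = Sigma (outer_pairs n) (\<lambda>(a, b). compositions (n - a - b))"
  define glue where "glue = (\<lambda>((a, b), xs). a # xs @ [b] :: nat list)"
  define short where "short = (if n = 0 then [] else [n])"
  have "finite S"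
    by (auto simp: S_def finite_outer_pairs finite_compositions intro!: finite_SigmaI)
  moreover have "inj_on glue S" "short \<notin> glue ` S"
    by (auto simp: S_def glue_def short_def outer_pairs_def intro!: inj_onI)
  ultimately have "(\<Sum>c\<in>insert short (glue ` S). f c) = f short + (\<Sum>x\<in>S. f (glue x))"
    by (simp add: sum.reindex)
  also have "insert short (glue ` S) = compositions n"
    using compositions_outer_parts[of n] by (simp add: S_def glue_def short_def)
  also have "(\<Sum>x\<in>S. f (glue x))
      = (\<Sum>(a, b)\<in>outer_pairs n. \<Sum>xs\<in>compositions (n - a - b). f (a # xs @ [b]))"
    unfolding S_def glue_def split_def
    by (subst sum.Sigma) (auto simp: finite_outer_pairs finite_compositions split_def)
  finally show ?thesis
    by (simp add: short_def)
qed

definition da_sum :: "(nat \<Rightarrow> 'a::comm_monoid_add) \<Rightarrow> nat \<Rightarrow> 'a" where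
  "da_sum g n = (\<Sum>c\<in>compositions n. g (da c))"

lemma da_sum_cmult: "da_sum (\<lambda>j. c * f j) n = (c :: 'a::semiring_0) * da_sum f n"
  by (simp add: da_sum_def sum_distrib_left)

lemma da_sum_sum: "finite I \<Longrightarrow> da_sum (\<lambda>j. \<Sum>i\<in>I. f i j) n = (\<Sum>i\<in>I. da_sum (f i) n)"
  unfolding da_sum_def by (rule sum.swap)

lemma da_sum_eq_outer:
  "da_sum g n = g 0 + (\<Sum>(a, b)\<in>outer_pairs n. da_sum (\<lambda>j. g (of_bool (a \<noteq> b) + j)) (n - a - b))"
  unfolding da_sum_def by (subst sum_compositions_outer_parts) (simp add: da_Cons_snoc)

lemma da_sum_0: "da_sum g 0 = g 0" and da_sum_1: "da_sum g 1 = g 0"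
proof -
  have "outer_pairs 0 = {}" "outer_pairs 1 = {}"
    by (auto simp: outer_pairs_def)
  then show "da_sum g 0 = g 0" "da_sum g 1 = g 0"
    by (subst da_sum_eq_outer, simp)+
qed

lemma outer_pairs_add_2:
  "outer_pairs (n + 2) = insert (1, 1) ((\<lambda>k. (1, n + 1 - k)) ` {..<n} \<union>
     ((\<lambda>k. (n + 1 - k, 1)) ` {..<n} \<union> (\<lambda>(a, b). (Suc a, Suc b)) ` outer_pairs n))"
  (is "_ = insert (1, 1) (?L \<union> (?R \<union> ?I))")
proof (intro set_eqI iffI)
  fix x assume "x \<in> outer_pairs (n + 2)"
  then obtain a b where x: "x = (a, b)" "0 < a" "0 < b" "a + b \<le> n + 2"
    by (auto simp: outer_pairs_def)
  consider "a = 1" "b = 1" | "a = 1" "b \<noteq> 1" | "a \<noteq> 1" "b = 1" | "a \<noteq> 1" "b \<noteq> 1"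
    by blast
  then show "x \<in> insert (1, 1) (?L \<union> (?R \<union> ?I))"
  proof cases
    case 2
    then have "x \<in> ?L"
      using x by (intro image_eqI[where x = "n + 1 - b"]) auto
    then show ?thesis by blast
  next
    case 3
    then have "x \<in> ?R"
      using x by (intro image_eqI[where x = "n + 1 - a"]) auto
    then show ?thesis by blast
  next
    case 4
    then have "x \<in> ?I"
      using x by (intro image_eqI[where x = "(a - 1, b - 1)"]) (auto simp: outer_pairs_def)
    then show ?thesis by blast
  qed (use x in simp)
qed (auto simp: outer_pairs_def)

lemma sum_outer_pairs_add_2:
  "(\<Sum>p\<in>outer_pairs (n + 2). f p) = f (1, 1) + (\<Sum>k<n. f (1, n + 1 - k)) + (\<Sum>k<n. f (n + 1 - k, 1))
     + (\<Sum>(a, b)\<in>outer_pairs n. f (Suc a, Suc b))"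
proof -
  define L where "L = (\<lambda>k. (1::nat, n + 1 - k)) ` {..<n}"
  define R where "R = (\<lambda>k. (n + 1 - k, 1::nat)) ` {..<n}"
  define I where "I = (\<lambda>(a, b). (Suc a, Suc b)) ` outer_pairs n"
  have "(1, 1) \<notin> L \<union> (R \<union> I)" "L \<inter> (R \<union> I) = {}" "R \<inter> I = {}"
    by (auto simp: L_def R_def I_def outer_pairs_def)
  moreover have "finite L" "finite R" "finite I"
    by (simp_all add: L_def R_def I_def finite_outer_pairs)
  ultimately have "(\<Sum>p\<in>outer_pairs (n + 2). f p) = f (1, 1) + sum f L + sum f R + sum f I"
    unfolding outer_pairs_add_2 L_def[symmetric] R_def[symmetric] I_def[symmetric]
    by (simp add: sum.union_disjoint add.assoc)
  moreover have "inj_on (\<lambda>k. (1::nat, n + 1 - k)) {..<n}" "inj_on (\<lambda>k. (n + 1 - k, 1::nat)) {..<n}"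
    "inj_on (\<lambda>(a, b). (Suc a, Suc b)) (outer_pairs n)"
    by (auto intro!: inj_onI)
  ultimately show ?thesis
    by (simp add: L_def R_def I_def sum.reindex split_def)
qed

lemma da_sum_add_2:
  fixes g :: "nat \<Rightarrow> 'a::comm_ring_1"
  shows "da_sum g (n + 2) = 2 * da_sum g n + 2 * (\<Sum>k<n. da_sum (\<lambda>j. g (Suc j)) k)"
proof -
  define F where "F m = (\<lambda>(a, b). da_sum (\<lambda>j. g (of_bool (a \<noteq> b) + j)) (m - a - b))" for m
  define T where "T = (\<Sum>k<n. da_sum (\<lambda>j. g (Suc j)) k)"
  have outer: "da_sum g m = g 0 + sum (F m) (outer_pairs m)" for m
    unfolding F_def by (rule da_sum_eq_outer)
  have "da_sum g (n + 2) = g 0 + (F (n + 2) (1, 1) + (\<Sum>k<n. F (n + 2) (1, n + 1 - k))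
      + (\<Sum>k<n. F (n + 2) (n + 1 - k, 1)) + (\<Sum>(a, b)\<in>outer_pairs n. F (n + 2) (Suc a, Suc b)))"
    by (simp only: outer[of "n + 2"] sum_outer_pairs_add_2)
  also have "F (n + 2) (1, 1) = da_sum g n"
    by (simp add: F_def)
  also have "(\<Sum>k<n. F (n + 2) (1, n + 1 - k)) = T"
    unfolding T_def F_def by (intro sum.cong) auto
  also have "(\<Sum>k<n. F (n + 2) (n + 1 - k, 1)) = T"
    unfolding T_def F_def by (intro sum.cong) auto
  also have "(\<Sum>(a, b)\<in>outer_pairs n. F (n + 2) (Suc a, Suc b)) = sum (F n) (outer_pairs n)"
    unfolding F_def by (intro sum.cong) auto
  also have "g 0 + (da_sum g n + T + T + sum (F n) (outer_pairs n))
      = da_sum g n + 2 * T + (g 0 + sum (F n) (outer_pairs n))"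
    by (simp add: algebra_simps)
  also have "g 0 + sum (F n) (outer_pairs n) = da_sum g n"
    by (rule outer[symmetric])
  also have "da_sum g n + 2 * T + da_sum g n = 2 * da_sum g n + 2 * T"
    by (simp add: algebra_simps)
  finally show ?thesis
    unfolding T_def .
qed

lemma da_sum_rec:
  fixes g :: "nat \<Rightarrow> 'a::comm_ring_1"
  shows "da_sum g (n + 3)
           = da_sum g (n + 2) + 2 * da_sum g (n + 1) - 2 * da_sum g n + 2 * da_sum (\<lambda>j. g (Suc j)) n"
  using da_sum_add_2[of g n] da_sum_add_2[of g "n + 1"]
  by (simp add: algebra_simps numeral_3_eq_3)

lemma da_sum_2: "da_sum g 2 = 2 * (g 0 :: 'a::comm_ring_1)"
  using da_sum_add_2[of g 0] by (simp add: da_sum_0 numeral_2_eq_2)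

section \<open>Mean and variance\<close>

lemma nat_induct_3 [case_names 0 1 2 step]:
  fixes n :: nat
  assumes "P 0" "P 1" "P 2" "\<And>n. P n \<Longrightarrow> P (n + 1) \<Longrightarrow> P (n + 2) \<Longrightarrow> P (n + 3)"
  shows "P n"
proof (induction n rule: less_induct)
  case (less n)
  show ?case
  proof (cases "n < 3")
    case True
    then have "n = 0 \<or> n = 1 \<or> n = 2" by auto
    then show ?thesis using assms by auto
  next
    case False
    then obtain m where "n = m + 3"
      by (metis add.commute le_Suc_ex not_less)
    then show ?thesis
      using less assms(4)[of m] by simp
  qed
qed

definition da_power_sum :: "nat \<Rightarrow> nat \<Rightarrow> real" where
  "da_power_sum k n = da_sum (\<lambda>j. real j ^ k) n"

lemma da_power_sum_small:
  "da_power_sum k 0 = 0 ^ k" "da_power_sum k (Suc 0) = 0 ^ k" "da_power_sum k (Suc (Suc 0)) = 2 * 0 ^ k"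
  using da_sum_1[of "\<lambda>j. real j ^ k"] da_sum_2[of "\<lambda>j. real j ^ k"]
  by (simp_all add: da_power_sum_def da_sum_0 numeral_2_eq_2)

lemma da_power_sum_rec:
  "da_power_sum k (n + 3) = da_power_sum k (n + 2) + 2 * da_power_sum k (n + 1)
     + 2 * (\<Sum>i<k. of_nat (k choose i) * da_power_sum i n)"
proof -
  have "real (Suc j) ^ k = (\<Sum>i\<le>k. of_nat (k choose i) * real j ^ i)" for j
    using binomial_ring[of "real j" 1 k] by (simp add: add.commute)
  then have "da_sum (\<lambda>j. real (Suc j) ^ k) n = (\<Sum>i\<le>k. of_nat (k choose i) * da_power_sum i n)"
    by (simp add: da_sum_sum da_sum_cmult da_power_sum_def)
  also have "\<dots> = da_power_sum k n + (\<Sum>i<k. of_nat (k choose i) * da_power_sum i n)"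
    by (simp add: lessThan_Suc_atMost[symmetric])
  finally show ?thesis
    using da_sum_rec[of "\<lambda>j. real j ^ k" n] by (simp add: da_power_sum_def)
qed

lemma da_power_sum_rec_0: "da_power_sum 0 (n + 3) = da_power_sum 0 (n + 2) + 2 * da_power_sum 0 (n + 1)"
  and da_power_sum_rec_1: "da_power_sum 1 (n + 3)
      = da_power_sum 1 (n + 2) + 2 * da_power_sum 1 (n + 1) + 2 * da_power_sum 0 n"
  and da_power_sum_rec_2: "da_power_sum 2 (n + 3)
      = da_power_sum 2 (n + 2) + 2 * da_power_sum 2 (n + 1) + 2 * da_power_sum 0 n + 4 * da_power_sum 1 n"
  using da_power_sum_rec[of 0 n] da_power_sum_rec[of 1 n] da_power_sum_rec[of 2 n]
  by (simp_all add: numeral_2_eq_2 lessThan_Suc)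

text \<open>The recurrences have characteristic polynomial \<open>x\<^sup>3 - x\<^sup>2 - 2x = x (x - 2) (x + 1)\<close>;
  the root \<open>0\<close> only affects the first few values, which is why the closed forms hold from
  \<open>n = 1, 2, 3\<close> on.\<close>

lemma da_power_sum_0: "da_power_sum 0 (Suc n) = 2 ^ n"
proof (induction n rule: nat_induct_3)
  case (step n)
  then show ?case
    using da_power_sum_rec_0[of "n + 1"] by (simp add: eval_nat_numeral)
qed (simp_all add: da_power_sum_small da_power_sum_rec_0[of 0, simplified])

lemma da_power_sum_1:
  "da_power_sum 1 (n + 2) = (real (n + 2) / 12 - 1 / 18) * 2 ^ (n + 2) - 4 / 9 * (- 1) ^ (n + 2)"
proof (induction n rule: nat_induct_3)
  case 0
  then show ?case by (simp add: da_power_sum_small eval_nat_numeral)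
next
  case 1
  show ?case
    using da_power_sum_rec_1[of 0] by (simp add: da_power_sum_small eval_nat_numeral)
next
  case 2
  show ?case
    using da_power_sum_rec_1[of 0] da_power_sum_rec_1[of 1] by (simp add: da_power_sum_small eval_nat_numeral)
next
  case (step n)
  have "da_power_sum 0 (n + 2) = 2 ^ (n + 1)"
    using da_power_sum_0[of "n + 1"] by simp
  then show ?case
    using step da_power_sum_rec_1[of "n + 2"] by (simp add: eval_nat_numeral field_simps)
qed

lemma da_power_sum_2:
  "da_power_sum 2 (n + 3) = (real (n + 3)^2 / 72 + real (n + 3) / 216 + 1 / 54) * 2 ^ (n + 3)
     + (16 * real (n + 3) / 27 - 68 / 27) * (- 1) ^ (n + 3)"
proof (induction n rule: nat_induct_3)
  case 0
  show ?case
    using da_power_sum_rec_2[of 0] by (simp add: da_power_sum_small eval_nat_numeral)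
next
  case 1
  show ?case
    using da_power_sum_rec_2[of 0] da_power_sum_rec_2[of 1] by (simp add: da_power_sum_small eval_nat_numeral)
next
  case 2
  have "da_power_sum 1 3 = 2"
    using da_power_sum_1[of 1] by (simp add: eval_nat_numeral)
  then show ?case
    using da_power_sum_rec_2[of 0] da_power_sum_rec_2[of 1] da_power_sum_rec_2[of 2]
    by (simp add: da_power_sum_small eval_nat_numeral)
next
  case (step n)
  have "da_power_sum 0 (n + 3) = 2 ^ (n + 2)"
    using da_power_sum_0[of "n + 2"] by (simp add: eval_nat_numeral)
  moreover have "da_power_sum 1 (n + 3) = (real (n + 3) / 12 - 1 / 18) * 2 ^ (n + 3) - 4 / 9 * (- 1) ^ (n + 3)"
    using da_power_sum_1[of "n + 1"] by (simp add: eval_nat_numeral)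
  ultimately show ?case
    using step da_power_sum_rec_2[of "n + 3"] by (simp add: eval_nat_numeral field_simps power2_eq_square)
qed

lemma card_compositions: "real (card (compositions n)) = da_power_sum 0 n"
  by (simp add: da_power_sum_def da_sum_def)

lemma card_compositions_le: "card (compositions n) \<le> 2 ^ n"
proof (cases n)
  case 0
  then show ?thesis
    using card_compositions[of 0] by (simp add: da_power_sum_small eval_nat_numeral)
next
  case (Suc m)
  then have "real (card (compositions n)) \<le> 2 ^ n"
    using card_compositions[of n] da_power_sum_0[of m] by simp
  then show ?thesis
    by (simp add: of_nat_le_iff[symmetric])
qed

lemma card_compositions_Suc: "card (compositions (Suc n)) = 2 ^ n"
proof -
  have "real (card (compositions (Suc n))) = real (2 ^ n)"
    by (simp add: card_compositions da_power_sum_0)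
  then show ?thesis
    by (simp only: of_nat_eq_iff)
qed

lemma set_pmf_comp_pmf [simp]: "set_pmf (comp_pmf n) = compositions n"
  by (simp add: comp_pmf_def compositions_not_empty finite_compositions)

lemma integral_comp_pmf_da:
  fixes f :: "nat \<Rightarrow> 'a::{banach, real_normed_field, second_countable_topology}"
  shows "integral\<^sup>L (comp_pmf n) (\<lambda>c. f (da c)) = da_sum f n / of_nat (card (compositions n))"
  unfolding comp_pmf_def da_sum_def
  by (subst integral_measure_pmf[OF finite_compositions])
     (auto simp: compositions_not_empty finite_compositions scaleR_conv_of_real sum_divide_distrib
        intro!: sum.cong)

lemma EX_da_eq: "EX_da n = da_power_sum 1 n / da_power_sum 0 n"
  by (simp add: EX_da_def integral_comp_pmf_da card_compositions da_power_sum_def)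

lemma VX_da_eq: "VX_da n = da_power_sum 2 n / da_power_sum 0 n - (da_power_sum 1 n / da_power_sum 0 n)\<^sup>2"
proof -
  have [simp]: "integrable (comp_pmf n) f" for f :: "nat list \<Rightarrow> real"
    by (rule integrable_measure_pmf_finite) (simp add: finite_compositions)
  show ?thesis
    unfolding VX_da_def EX_da_eq[symmetric] EX_da_def
    by (subst measure_pmf.variance_eq)
       (simp_all add: integral_comp_pmf_da integral_comp_pmf_da[where f = "\<lambda>j. (real j)\<^sup>2"]
         card_compositions da_power_sum_def)
qed

lemma da_power_sum_ratios:
  assumes "3 \<le> n"
  shows "da_power_sum 1 n / da_power_sum 0 n = real n / 6 - 1 / 9 - 8 / 9 * (- 1 / 2) ^ n"
    and "da_power_sum 2 n / da_power_sum 0 n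
           = (real n)\<^sup>2 / 36 + real n / 108 + 1 / 27 + (32 / 27 * real n - 136 / 27) * (- 1 / 2) ^ n"
proof -
  define y where "y = (- 1 / 2 :: real) ^ n"
  have sign: "(- 1 :: real) ^ n = y * 2 ^ n"
    by (simp add: y_def flip: power_mult_distrib)
  have n1: "Suc (n - 1) = n" and n2: "n - 2 + 2 = n" and n3: "n - 3 + 3 = n"
    using assms by simp_all
  have S0: "da_power_sum 0 n = 2 ^ n / 2"
    using da_power_sum_0[of "n - 1", unfolded n1] assms by (simp add: power_diff)
  show "da_power_sum 1 n / da_power_sum 0 n = real n / 6 - 1 / 9 - 8 / 9 * (- 1 / 2) ^ n"
    using da_power_sum_1[of "n - 2", unfolded n2]
    unfolding S0 sign y_def[symmetric] by (simp add: field_simps)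
  show "da_power_sum 2 n / da_power_sum 0 n
      = (real n)\<^sup>2 / 36 + real n / 108 + 1 / 27 + (32 / 27 * real n - 136 / 27) * (- 1 / 2) ^ n"
    using da_power_sum_2[of "n - 3", unfolded n3]
    unfolding S0 sign y_def[symmetric] by (simp add: field_simps)
qed

lemma EX_da_closed_form:
  assumes "3 \<le> n"
  shows "EX_da n = real n / 6 - 1 / 9 - 8 / 9 * (- 1 / 2) ^ n"
  using da_power_sum_ratios(1)[OF assms] by (simp add: EX_da_eq)

lemma VX_da_closed_form:
  assumes "3 \<le> n"
  shows "VX_da n = 5 * real n / 108 + 2 / 81 + (40 / 27 * real n - 424 / 81) * (- 1 / 2) ^ n
    - 64 / 81 * (1 / 4) ^ n"
proof -
  define y where "y = (- 1 / 2 :: real) ^ n"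
  have "VX_da n = (real n)\<^sup>2 / 36 + real n / 108 + 1 / 27 + (32 / 27 * real n - 136 / 27) * y
      - (real n / 6 - 1 / 9 - 8 / 9 * y)\<^sup>2"
    unfolding VX_da_eq da_power_sum_ratios[OF assms, folded y_def] ..
  also have "\<dots> = 5 * real n / 108 + 2 / 81 + (40 / 27 * real n - 424 / 81) * y - 64 / 81 * y\<^sup>2"
    by (simp add: power2_eq_square field_simps)
  also have "y\<^sup>2 = (1 / 4) ^ n"
    by (simp add: y_def power2_eq_square flip: power_mult_distrib)
  finally show ?thesis
    unfolding y_def .
qed

lemma EX_da_bound:
  assumes "3 \<le> n"
  shows "\<bar>EX_da n - real n / 6\<bar> \<le> 1"
proof -
  define y where "y = (- 1 / 2 :: real) ^ n"
  have "\<bar>y\<bar> \<le> 1"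
    by (simp add: y_def power_abs power_le_one)
  then show ?thesis
    unfolding EX_da_closed_form[OF assms] y_def[symmetric] by (simp add: abs_le_iff)
qed

lemma VX_da_bound:
  assumes "3 \<le> n"
  shows "\<bar>VX_da n - 5 * real n / 108\<bar> \<le> 3"
proof -
  define y where "y = (- 1 / 2 :: real) ^ n"
  define z where "z = real n * y"
  define w where "w = (1 / 4 :: real) ^ n"
  have abs_y: "\<bar>y\<bar> = 1 / 2 ^ n"
    by (simp add: y_def power_abs power_divide)
  have "real n \<le> 2 ^ n"
    using less_exp[of n] by (metis less_imp_le of_nat_le_iff of_nat_numeral of_nat_power)
  then have "\<bar>z\<bar> \<le> 1"
    by (simp add: z_def abs_y abs_mult)
  moreover have "\<bar>y\<bar> \<le> 1 / 8"
    using power_increasing[OF assms, of "2 :: real"] by (simp add: abs_y)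
  moreover have "0 \<le> w" "w \<le> 1"
    by (simp_all add: w_def power_le_one)
  moreover have "VX_da n - 5 * real n / 108 = 2 / 81 + 40 / 27 * z - 424 / 81 * y - 64 / 81 * w"
    unfolding VX_da_closed_form[OF assms] y_def[symmetric] w_def[symmetric] z_def
    by (simp add: algebra_simps)
  ultimately show ?thesis
    unfolding abs_le_iff by linarith
qed

section \<open>A perturbed linear recurrence\<close>

lemma two_step_decay:
  fixes r :: "nat \<Rightarrow> real"
  assumes nonneg: "\<And>k. 0 \<le> r k"
    and rec: "\<And>k. r (k + 2) \<le> a * r (k + 1) + b * r k + R"
    and "0 \<le> a" "0 \<le> b" "a + b \<le> 9 / 16" "0 \<le> R"
  shows "r k \<le> (r 0 + 2 * r 1) * (3 / 4) ^ k + 3 * R"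
proof (induction k rule: less_induct)
  case (less k)
  define K where "K = r 0 + 2 * r 1"
  have "0 \<le> K"
    unfolding K_def using nonneg[of 0] nonneg[of 1] by simp
  show ?case
  proof (cases "k < 2")
    case True
    then consider "k = 0" | "k = 1" by linarith
    then show ?thesis
    proof cases
      case 1
      then show ?thesis
        using nonneg[of 1] \<open>0 \<le> R\<close> by simp
    next
      case 2
      then show ?thesis
        using nonneg[of 0] nonneg[of 1] \<open>0 \<le> R\<close> by (simp add: algebra_simps)
    qed
  next
    case False
    then obtain j where j: "k = j + 2"
      by (metis add.commute le_Suc_ex not_less)
    define X where "X = K * (3 / 4) ^ j"
    have "0 \<le> X"
      unfolding X_def using \<open>0 \<le> K\<close> by simp
    have IH: "r (j + 1) \<le> X * (3 / 4) + 3 * R" "r j \<le> X + 3 * R"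
      using less.IH[of "j + 1"] less.IH[of j] unfolding j X_def K_def by simp_all
    have "r k \<le> a * r (j + 1) + b * r j + R"
      using rec[of j] j by simp
    also have "\<dots> \<le> a * (X * (3 / 4) + 3 * R) + b * (X + 3 * R) + R"
      using IH assms by (intro add_mono mult_left_mono) auto
    also have "\<dots> = X * (a * (3 / 4) + b) + 3 * R * (a + b) + R"
      by (simp add: algebra_simps)
    also have "\<dots> \<le> X * (9 / 16) + 3 * R * (9 / 16) + R"
      using \<open>0 \<le> X\<close> assms by (intro add_mono mult_left_mono) auto
    also have "\<dots> \<le> K * (3 / 4) ^ k + 3 * R"
      using \<open>0 \<le> R\<close> unfolding X_def j by (simp add: power_add)
    finally show ?thesis
      unfolding K_def .
  qed
qed

lemma two_step_decay_sum:
  fixes r :: "nat \<Rightarrow> real"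
  assumes "\<And>k. 0 \<le> r k"
    and "\<And>k. r (k + 2) \<le> a * r (k + 1) + b * r k + R"
    and "0 \<le> a" "0 \<le> b" "a + b \<le> 9 / 16" "0 \<le> R"
  shows "(\<Sum>k<n. r k) \<le> 4 * (r 0 + 2 * r 1) + 3 * real n * R"
proof -
  have "(\<Sum>k<n. (3 / 4 :: real) ^ k) \<le> 4"
    by (simp add: sum_gp_strict)
  then have "(r 0 + 2 * r 1) * (\<Sum>k<n. (3 / 4) ^ k) \<le> (r 0 + 2 * r 1) * 4"
    using assms(1)[of 0] assms(1)[of 1] by (intro mult_left_mono) auto
  moreover have "(\<Sum>k<n. r k) \<le> (\<Sum>k<n. (r 0 + 2 * r 1) * (3 / 4) ^ k + 3 * R)"
    by (intro sum_mono two_step_decay[OF assms])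
  moreover have "(\<Sum>k<n. (r 0 + 2 * r 1) * (3 / 4) ^ k + 3 * R)
      = (r 0 + 2 * r 1) * (\<Sum>k<n. (3 / 4) ^ k) + 3 * real n * R"
    by (simp add: sum.distrib sum_distrib_left)
  ultimately show ?thesis
    by (simp add: mult.commute)
qed

lemma norm_telescope_power:
  fixes p :: "nat \<Rightarrow> 'a::real_normed_div_algebra"
  assumes "norm z \<le> 1"
  shows "norm (p (m + 1) - z ^ m * p 1) \<le> (\<Sum>k<m. norm (p (k + 2) - z * p (k + 1)))"
proof (induction m)
  case (Suc m)
  have "p (Suc m + 1) - z ^ Suc m * p 1 = (p (m + 2) - z * p (m + 1)) + z * (p (m + 1) - z ^ m * p 1)"
    by (simp add: algebra_simps)
  then have "norm (p (Suc m + 1) - z ^ Suc m * p 1)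
      \<le> norm (p (m + 2) - z * p (m + 1)) + norm z * norm (p (m + 1) - z ^ m * p 1)"
    by (metis norm_mult norm_triangle_ineq)
  also have "\<dots> \<le> norm (p (m + 2) - z * p (m + 1)) + norm (p (m + 1) - z ^ m * p 1)"
    using assms by (simp add: mult_left_le_one_le)
  finally show ?case
    using Suc.IH by simp
qed simp

text \<open>Writing \<open>x\<^sup>3 - x\<^sup>2/2 - x/2 + \<epsilon>/4 = (x - z) (x\<^sup>2 + (z - 1/2) x + (z - 1) (z + 1/2)) + G\<close>,
  the differences \<open>p (k + 2) - z p (k + 1)\<close> satisfy a second order recurrence whose coefficients
  are small for \<open>z\<close> near \<open>1\<close> and which is driven by \<open>G\<close>.\<close>

lemma cubic_recurrence_approx:
  fixes p :: "nat \<Rightarrow> complex"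
  assumes rec: "\<And>n. p (n + 3) = p (n + 2) / 2 + p (n + 1) / 2 - \<epsilon> * p n / 4"
    and bounded: "\<And>n. norm (p n) \<le> 1"
    and "norm z \<le> 1" and "norm (z - 1) \<le> 1 / 48"
  shows "norm (p (n + 1) - z ^ n * p 1)
    \<le> 4 * (norm (p 2 - z * p 1) + 2 * norm (p 3 - z * p 2))
       + 3 * real n * norm (z ^ 3 - z ^ 2 / 2 - z / 2 + \<epsilon> / 4)"
proof -
  define G where "G = z ^ 3 - z ^ 2 / 2 - z / 2 + \<epsilon> / 4"
  define q where "q k = p (k + 2) - z * p (k + 1)" for k
  define \<alpha> where "\<alpha> = z - 1 / 2"
  define \<beta> where "\<beta> = (z - 1) * (z + 1 / 2)"
  have q_rec: "q (k + 2) = - \<alpha> * q (k + 1) - \<beta> * q k - G * p (k + 1)" for k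
  proof -
    have "p (Suc (Suc (Suc (Suc k))))
        = p (Suc (Suc (Suc k))) / 2 + p (Suc (Suc k)) / 2 - \<epsilon> * p (Suc k) / 4"
      using rec[of "k + 1"] by (simp add: eval_nat_numeral)
    then show ?thesis
      unfolding q_def \<alpha>_def \<beta>_def G_def
      by (simp add: eval_nat_numeral) (simp add: field_simps power2_eq_square power3_eq_cube)
  qed
  define r where "r k = norm (q k)" for k
  have r_rec: "r (k + 2) \<le> norm \<alpha> * r (k + 1) + norm \<beta> * r k + norm G" for k
  proof -
    have "r (k + 2) \<le> norm (\<alpha> * q (k + 1)) + norm (\<beta> * q k) + norm (G * p (k + 1))"
      unfolding r_def q_rec
      using norm_triangle_ineq4[of "- \<alpha> * q (k + 1) - \<beta> * q k" "G * p (k + 1)"]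
        norm_triangle_ineq4[of "- \<alpha> * q (k + 1)" "\<beta> * q k"]
      by simp
    also have "\<dots> \<le> norm \<alpha> * r (k + 1) + norm \<beta> * r k + norm G"
      using bounded[of "k + 1"] unfolding r_def norm_mult
      by (intro add_mono mult_left_le) auto
    finally show ?thesis .
  qed
  have "norm \<alpha> \<le> 1 / 2 + norm (z - 1)"
    using norm_triangle_ineq[of "z - 1" "1 / 2"] by (simp add: \<alpha>_def)
  moreover have "norm \<beta> \<le> norm (z - 1) * (3 / 2)"
  proof -
    have "norm (z + 1 / 2) \<le> 3 / 2"
      using norm_triangle_ineq[of z "1 / 2"] \<open>norm z \<le> 1\<close> by simp
    then show ?thesis
      unfolding \<beta>_def norm_mult by (intro mult_left_mono) auto
  qed
  ultimately have "norm \<alpha> + norm \<beta> \<le> 9 / 16"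
    using \<open>norm (z - 1) \<le> 1 / 48\<close> by linarith
  then have "(\<Sum>k<n. r k) \<le> 4 * (r 0 + 2 * r 1) + 3 * real n * norm G"
    by (intro two_step_decay_sum[OF _ r_rec]) (auto simp: r_def)
  have "norm (p (n + 1) - z ^ n * p 1) \<le> (\<Sum>k<n. r k)"
    unfolding r_def q_def by (rule norm_telescope_power[OF \<open>norm z \<le> 1\<close>])
  also have "\<dots> \<le> 4 * (r 0 + 2 * r 1) + 3 * real n * norm G"
    by fact
  also have "r 0 = norm (p 2 - z * p 1)"
    by (simp add: r_def q_def eval_nat_numeral)
  also have "r 1 = norm (p 3 - z * p 2)"
    by (simp add: r_def q_def eval_nat_numeral)
  finally show ?thesis
    unfolding G_def by (simp add: algebra_simps)
qed

lemma norm_exp_minus_taylor_le: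
  fixes z :: complex
  assumes "norm z \<le> 1"
  shows "norm (exp z - (\<Sum>i\<le>n. z ^ i / fact i)) \<le> 3 * norm z ^ Suc n / fact n"
proof -
  have "exp (norm z) \<le> 3"
    using exp_le exp_mono[OF assms] by linarith
  then have "exp (norm z) * norm z ^ Suc n / fact n \<le> 3 * norm z ^ Suc n / fact n"
    by (intro divide_right_mono mult_right_mono) auto
  then show ?thesis
    using Taylor_exp_field[of z n] by linarith
qed

lemma norm_exp_minus_1_le:
  fixes z :: complex
  shows "norm z \<le> 1 \<Longrightarrow> norm (exp z - 1) \<le> 3 * norm z"
  using norm_exp_minus_taylor_le[of z 0] by simp

definition exp_rem2 :: "complex \<Rightarrow> complex" where
  "exp_rem2 z = exp z - 1 - z - z\<^sup>2 / 2"

lemma norm_exp_rem2_le: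
  assumes "norm z \<le> r" "r \<le> 1"
  shows "norm (exp_rem2 z) \<le> 2 * r ^ 3"
proof -
  have "norm (exp_rem2 z) \<le> 3 * norm z ^ 3 / 2"
    using norm_exp_minus_taylor_le[of z 2] assms unfolding exp_rem2_def
    by (simp add: eval_nat_numeral diff_diff_eq)
  moreover have "norm z ^ 3 \<le> r ^ 3" "0 \<le> norm z ^ 3"
    using assms by (auto intro: power_mono)
  ultimately show ?thesis
    by linarith
qed

section \<open>The characteristic function\<close>

lemma char_normalized_da:
  "char (distr (measure_pmf (comp_pmf n)) borel (\<lambda>c. (real (da c) - \<mu>) / \<sigma>)) s
     = iexp (- (s / \<sigma>) * \<mu>) * da_sum (\<lambda>j. iexp (s / \<sigma>) ^ j) n / of_nat (card (compositions n))"
proof -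
  have iexp_add: "iexp (a + b) = iexp a * iexp b" for a b
    by (simp add: distrib_left exp_add)
  have iexp_split: "iexp (s * ((real j - \<mu>) / \<sigma>)) = iexp (- (s / \<sigma>) * \<mu>) * iexp (s / \<sigma>) ^ j" for j
  proof -
    have "s * ((real j - \<mu>) / \<sigma>) = - (s / \<sigma>) * \<mu> + real j * (s / \<sigma>)"
      by (cases "\<sigma> = 0") (simp_all add: field_simps)
    then have "iexp (s * ((real j - \<mu>) / \<sigma>)) = iexp (- (s / \<sigma>) * \<mu>) * iexp (real j * (s / \<sigma>))"
      by (simp only: iexp_add)
    also have "iexp (real j * (s / \<sigma>)) = iexp (s / \<sigma>) ^ j"
      by (simp add: exp_of_nat_mult[symmetric] mult.left_commute)
    finally show ?thesis .
  qed
  have "char (distr (measure_pmf (comp_pmf n)) borel (\<lambda>c. (real (da c) - \<mu>) / \<sigma>)) s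
      = integral\<^sup>L (comp_pmf n) (\<lambda>c. iexp (s * ((real (da c) - \<mu>) / \<sigma>)))"
    unfolding char_def by (subst integral_distr) auto
  also have "\<dots> = da_sum (\<lambda>j. iexp (s * ((real j - \<mu>) / \<sigma>))) n / of_nat (card (compositions n))"
    by (rule integral_comp_pmf_da)
  also have "da_sum (\<lambda>j. iexp (s * ((real j - \<mu>) / \<sigma>))) n
      = iexp (- (s / \<sigma>) * \<mu>) * da_sum (\<lambda>j. iexp (s / \<sigma>) ^ j) n"
    unfolding iexp_split by (rule da_sum_cmult)
  finally show ?thesis .
qed

text \<open>For \<open>n \<ge> 1\<close> this is half the characteristic function of \<open>da\<close>; normalising by \<open>2 ^ n\<close>
  instead of the number of compositions gives a recurrence with constant coefficients.\<close>

definition scaled_da_cf :: "real \<Rightarrow> nat \<Rightarrow> complex" where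
  "scaled_da_cf \<theta> n = da_sum (\<lambda>j. iexp \<theta> ^ j) n / 2 ^ n"

lemma scaled_da_cf_rec:
  "scaled_da_cf \<theta> (n + 3)
     = scaled_da_cf \<theta> (n + 2) / 2 + scaled_da_cf \<theta> (n + 1) / 2 - (1 - iexp \<theta>) * scaled_da_cf \<theta> n / 4"
proof -
  have "da_sum (\<lambda>j. iexp \<theta> ^ Suc j) n = iexp \<theta> * da_sum (\<lambda>j. iexp \<theta> ^ j) n"
    using da_sum_cmult[of "iexp \<theta>" "\<lambda>j. iexp \<theta> ^ j" n] by simp
  then have D3: "da_sum (\<lambda>j. iexp \<theta> ^ j) (n + 3) = da_sum (\<lambda>j. iexp \<theta> ^ j) (n + 2)
      + 2 * da_sum (\<lambda>j. iexp \<theta> ^ j) (n + 1) - 2 * (1 - iexp \<theta>) * da_sum (\<lambda>j. iexp \<theta> ^ j) n"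
    using da_sum_rec[of "\<lambda>j. iexp \<theta> ^ j" n] by (simp add: algebra_simps)
  show ?thesis
    unfolding scaled_da_cf_def D3 by (simp add: field_simps power_add)
qed

lemma norm_scaled_da_cf_le: "norm (scaled_da_cf \<theta> n) \<le> 1"
proof -
  have "norm (da_sum (\<lambda>j. iexp \<theta> ^ j) n) \<le> (\<Sum>c\<in>compositions n. norm (iexp \<theta> ^ da c))"
    unfolding da_sum_def by (rule norm_sum)
  also have "\<dots> = real (card (compositions n))"
    by (simp add: norm_power)
  also have "\<dots> \<le> 2 ^ n"
    using card_compositions_le[of n] by (metis of_nat_le_iff of_nat_numeral of_nat_power)
  finally show ?thesis
    unfolding scaled_da_cf_def by (simp add: norm_divide norm_power)
qed

lemma scaled_da_cf_small:
  "scaled_da_cf \<theta> 1 = 1 / 2" "scaled_da_cf \<theta> 2 = 1 / 2" "scaled_da_cf \<theta> 3 = (1 + iexp \<theta>) / 4"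
proof -
  have "scaled_da_cf \<theta> 0 = 1"
    by (simp add: scaled_da_cf_def da_sum_0)
  moreover show "scaled_da_cf \<theta> 1 = 1 / 2"
    using da_sum_1[of "\<lambda>j. iexp \<theta> ^ j"] by (simp add: scaled_da_cf_def)
  moreover show "scaled_da_cf \<theta> 2 = 1 / 2"
    using da_sum_2[of "\<lambda>j. iexp \<theta> ^ j"] by (simp add: scaled_da_cf_def)
  ultimately show "scaled_da_cf \<theta> 3 = (1 + iexp \<theta>) / 4"
    using scaled_da_cf_rec[of \<theta> 0] by (simp add: field_simps eval_nat_numeral)
qed

text \<open>The characteristic polynomial of \<open>scaled_da_cf_rec\<close> has a root \<open>exp (i\<mu>\<theta> - \<sigma>\<^sup>2\<theta>\<^sup>2/2) + O(\<theta>\<^sup>3)\<close>,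
  where \<open>\<mu> = 1/6\<close> and \<open>\<sigma>\<^sup>2 = 5/108\<close> are the limiting mean and variance of \<open>X\<^sub>n / n\<close>.\<close>

definition approx_root :: "real \<Rightarrow> complex" where
  "approx_root \<theta> = exp (\<i> * of_real \<theta> / 6 - 5 * of_real \<theta> ^ 2 / 216)"

lemma norm_approx_root_le: "norm (approx_root \<theta>) \<le> 1"
  by (simp add: approx_root_def power2_eq_square)

lemma norm_approx_root_exponent_le:
  assumes "\<bar>\<theta>\<bar> \<le> 1"
  shows "norm (\<i> * of_real \<theta> / 6 - 5 * of_real \<theta> ^ 2 / 216 :: complex) \<le> \<bar>\<theta>\<bar> / 5"
proof -
  have "\<theta>\<^sup>2 \<le> \<bar>\<theta>\<bar>"
    using assms by (simp add: power2_eq_square abs_mult[symmetric])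
      (metis abs_ge_zero abs_mult_self_eq mult_left_le_one_le)
  have "norm (\<i> * of_real \<theta> / 6 - 5 * of_real \<theta> ^ 2 / 216 :: complex)
     \<le> norm (\<i> * of_real \<theta> / 6 :: complex) + norm (5 * of_real \<theta> ^ 2 / 216 :: complex)"
    by (rule norm_triangle_ineq4)
  also have "\<dots> = \<bar>\<theta>\<bar> / 6 + 5 * \<theta>\<^sup>2 / 216"
    by (simp add: norm_mult norm_divide norm_power)
  also have "\<dots> \<le> \<bar>\<theta>\<bar> / 5"
    using \<open>\<theta>\<^sup>2 \<le> \<bar>\<theta>\<bar>\<close> by linarith
  finally show ?thesis .
qed

lemma norm_approx_root_minus_1_le:
  assumes "\<bar>\<theta>\<bar> \<le> 1"
  shows "norm (approx_root \<theta> - 1) \<le> \<bar>\<theta>\<bar>"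
  using norm_exp_minus_1_le[of "\<i> * of_real \<theta> / 6 - 5 * of_real \<theta> ^ 2 / 216"]
    norm_approx_root_exponent_le[OF assms] assms
  unfolding approx_root_def by linarith

lemma char_poly_approx_root_eq:
  fixes \<theta> :: real
  defines "w \<equiv> \<i> * of_real \<theta> / 6 - 5 * of_real \<theta> ^ 2 / 216"
  shows "approx_root \<theta> ^ 3 - approx_root \<theta> ^ 2 / 2 - approx_root \<theta> / 2 + (1 - iexp \<theta>) / 4
    = exp_rem2 (3 * w) - exp_rem2 (2 * w) / 2 - exp_rem2 w / 2 - exp_rem2 (\<i> * of_real \<theta>) / 4
      + (- 65 * \<i> * of_real \<theta> ^ 3 / 2592 + 325 * of_real \<theta> ^ 4 / 186624)"
proof -
  have "approx_root \<theta> = exp w"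
    unfolding approx_root_def w_def ..
  then have "approx_root \<theta> ^ 3 - approx_root \<theta> ^ 2 / 2 - approx_root \<theta> / 2 + (1 - iexp \<theta>) / 4
      = exp (3 * w) - exp (2 * w) / 2 - exp w / 2 + (1 - iexp \<theta>) / 4"
    by (simp flip: exp_of_nat_mult)
  also have "\<dots> = exp_rem2 (3 * w) - exp_rem2 (2 * w) / 2 - exp_rem2 w / 2 - exp_rem2 (\<i> * of_real \<theta>) / 4
      + (- 65 * \<i> * of_real \<theta> ^ 3 / 2592 + 325 * of_real \<theta> ^ 4 / 186624)"
    unfolding exp_rem2_def w_def by (simp add: field_simps power2_eq_square eval_nat_numeral)
  finally show ?thesis .
qed

lemma norm_char_poly_approx_root_le:
  assumes "\<bar>\<theta>\<bar> \<le> 1"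
  shows "norm (approx_root \<theta> ^ 3 - approx_root \<theta> ^ 2 / 2 - approx_root \<theta> / 2 + (1 - iexp \<theta>) / 4)
           \<le> 2 * \<bar>\<theta>\<bar> ^ 3"
proof -
  define w where "w = \<i> * of_real \<theta> / 6 - 5 * of_real \<theta> ^ 2 / 216"
  define rest where "rest = - 65 * \<i> * of_real \<theta> ^ 3 / 2592 + 325 * of_real \<theta> ^ 4 / 186624"
  have "norm w \<le> \<bar>\<theta>\<bar> / 5"
    unfolding w_def by (rule norm_approx_root_exponent_le[OF assms])
  then have "norm (exp_rem2 (3 * w)) \<le> 2 * (3 * (\<bar>\<theta>\<bar> / 5)) ^ 3"
    "norm (exp_rem2 (2 * w)) \<le> 2 * (2 * (\<bar>\<theta>\<bar> / 5)) ^ 3"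
    "norm (exp_rem2 w) \<le> 2 * (\<bar>\<theta>\<bar> / 5) ^ 3" "norm (exp_rem2 (\<i> * of_real \<theta>)) \<le> 2 * \<bar>\<theta>\<bar> ^ 3"
    using assms by (intro norm_exp_rem2_le; simp add: norm_mult)+
  then have "norm (exp_rem2 (3 * w)) \<le> 54 / 125 * \<bar>\<theta>\<bar> ^ 3"
    "norm (exp_rem2 (2 * w)) / 2 \<le> 8 / 125 * \<bar>\<theta>\<bar> ^ 3"
    "norm (exp_rem2 w) / 2 \<le> 1 / 125 * \<bar>\<theta>\<bar> ^ 3" "norm (exp_rem2 (\<i> * of_real \<theta>)) / 4 \<le> 1 / 2 * \<bar>\<theta>\<bar> ^ 3"
    by (simp_all add: power_mult_distrib power_divide)
  moreover have "norm rest \<le> 65 / 2592 * \<bar>\<theta>\<bar> ^ 3 + 325 / 186624 * \<bar>\<theta>\<bar> ^ 4"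
    using norm_triangle_ineq[of "- 65 * \<i> * of_real \<theta> ^ 3 / 2592" "325 * of_real \<theta> ^ 4 / 186624 :: complex"]
    by (simp add: rest_def norm_mult norm_divide norm_power)
  moreover have "\<bar>\<theta>\<bar> ^ 4 \<le> \<bar>\<theta>\<bar> ^ 3" "0 \<le> \<bar>\<theta>\<bar> ^ 3"
    using power_decreasing[of 3 4 "\<bar>\<theta>\<bar>"] assms by simp_all
  moreover have "norm (a - b - c - d + e) \<le> norm a + norm b + norm c + norm d + norm e" for a b c d e :: complex
    using norm_triangle_ineq[of "a - b - c - d" e] norm_triangle_ineq4[of "a - b - c" d]
      norm_triangle_ineq4[of "a - b" c] norm_triangle_ineq4[of a b] by linarith
  from this[of "exp_rem2 (3 * w)" "exp_rem2 (2 * w) / 2" "exp_rem2 w / 2" "exp_rem2 (\<i> * of_real \<theta>) / 4" rest]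
  have "norm (exp_rem2 (3 * w) - exp_rem2 (2 * w) / 2 - exp_rem2 w / 2 - exp_rem2 (\<i> * of_real \<theta>) / 4 + rest)
      \<le> norm (exp_rem2 (3 * w)) + norm (exp_rem2 (2 * w)) / 2 + norm (exp_rem2 w) / 2
        + norm (exp_rem2 (\<i> * of_real \<theta>)) / 4 + norm rest"
    by (simp add: norm_divide)
  ultimately show ?thesis
    unfolding char_poly_approx_root_eq w_def[symmetric] rest_def[symmetric] by linarith
qed

lemma scaled_da_cf_approx:
  assumes "\<bar>\<theta>\<bar> \<le> 1 / 48"
  shows "norm (scaled_da_cf \<theta> (n + 1) - approx_root \<theta> ^ n / 2) \<le> 12 * \<bar>\<theta>\<bar> + 6 * real n * \<bar>\<theta>\<bar> ^ 3"
proof -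
  let ?z = "approx_root \<theta>"
  have "\<bar>\<theta>\<bar> \<le> 1"
    using assms by simp
  have z_near_1: "norm (?z - 1) \<le> \<bar>\<theta>\<bar>"
    by (rule norm_approx_root_minus_1_le[OF \<open>\<bar>\<theta>\<bar> \<le> 1\<close>])
  have "norm (iexp \<theta> - 1) \<le> 3 * \<bar>\<theta>\<bar>"
    using norm_exp_minus_1_le[of "\<i> * of_real \<theta>"] \<open>\<bar>\<theta>\<bar> \<le> 1\<close> by (simp add: norm_mult)
  have e1: "scaled_da_cf \<theta> 2 - ?z * scaled_da_cf \<theta> 1 = - (?z - 1) / 2"
    and e2: "scaled_da_cf \<theta> 3 - ?z * scaled_da_cf \<theta> 2 = (iexp \<theta> - 1 - 2 * (?z - 1)) / 4"
    and e3: "?z ^ n * scaled_da_cf \<theta> 1 = ?z ^ n / 2"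
    by (simp_all add: scaled_da_cf_small scaled_da_cf_small[unfolded One_nat_def] field_simps)
  have "norm (- (?z - 1) / 2) \<le> \<bar>\<theta>\<bar> / 2"
    using z_near_1 by (simp add: norm_divide norm_minus_commute)
  moreover have "norm ((iexp \<theta> - 1 - 2 * (?z - 1)) / 4) \<le> 5 * \<bar>\<theta>\<bar> / 4"
  proof -
    have "norm (iexp \<theta> - 1 - 2 * (?z - 1)) \<le> norm (iexp \<theta> - 1) + 2 * norm (?z - 1)"
      using norm_triangle_ineq4[of "iexp \<theta> - 1" "2 * (?z - 1)"] by (simp only: norm_mult norm_numeral)
    also have "\<dots> \<le> 5 * \<bar>\<theta>\<bar>"
      using \<open>norm (iexp \<theta> - 1) \<le> 3 * \<bar>\<theta>\<bar>\<close> z_near_1 by linarith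
    finally show ?thesis
      by (simp add: norm_divide)
  qed
  moreover have "3 * real n * norm (?z ^ 3 - ?z ^ 2 / 2 - ?z / 2 + (1 - iexp \<theta>) / 4)
      \<le> 6 * real n * \<bar>\<theta>\<bar> ^ 3"
    using mult_left_mono[OF norm_char_poly_approx_root_le[OF \<open>\<bar>\<theta>\<bar> \<le> 1\<close>], of "3 * real n"] by simp
  ultimately have "4 * (norm (- (?z - 1) / 2) + 2 * norm ((iexp \<theta> - 1 - 2 * (?z - 1)) / 4))
        + 3 * real n * norm (?z ^ 3 - ?z ^ 2 / 2 - ?z / 2 + (1 - iexp \<theta>) / 4)
      \<le> 4 * (\<bar>\<theta>\<bar> / 2 + 2 * (5 * \<bar>\<theta>\<bar> / 4)) + 6 * real n * \<bar>\<theta>\<bar> ^ 3"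
    by (intro add_mono mult_left_mono) auto
  moreover have "norm (scaled_da_cf \<theta> (n + 1) - ?z ^ n / 2)
      \<le> 4 * (norm (- (?z - 1) / 2) + 2 * norm ((iexp \<theta> - 1 - 2 * (?z - 1)) / 4))
         + 3 * real n * norm (?z ^ 3 - ?z ^ 2 / 2 - ?z / 2 + (1 - iexp \<theta>) / 4)"
    using cubic_recurrence_approx[where p = "scaled_da_cf \<theta>" and z = ?z and n = n,
        OF scaled_da_cf_rec norm_scaled_da_cf_le norm_approx_root_le]
      z_near_1 assms unfolding e1 e2 e3 by simp
  ultimately show ?thesis
    by simp
qed

lemma n_mult_square_tendsto_imp:
  fixes t :: "nat \<Rightarrow> real"
  assumes "(\<lambda>n. real n * (t n)\<^sup>2) \<longlonglongrightarrow> c"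
  shows "t \<longlonglongrightarrow> 0" and "(\<lambda>n. real n * \<bar>t n\<bar> ^ 3) \<longlonglongrightarrow> 0"
proof -
  have "(\<lambda>n. real n * (t n)\<^sup>2 * (1 / real n)) \<longlonglongrightarrow> c * 0"
    by (intro tendsto_mult assms lim_const_over_n)
  moreover have "eventually (\<lambda>n. real n * (t n)\<^sup>2 * (1 / real n) = (t n)\<^sup>2) sequentially"
    using eventually_ge_at_top[of 1] by eventually_elim simp
  ultimately have "(\<lambda>n. (t n)\<^sup>2) \<longlonglongrightarrow> 0"
    by (simp add: Lim_transform_eventually)
  then have "(\<lambda>n. sqrt ((t n)\<^sup>2)) \<longlonglongrightarrow> sqrt 0"
    by (rule tendsto_real_sqrt)
  then show "t \<longlonglongrightarrow> 0"
    by (simp add: tendsto_rabs_zero_cancel)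
  then have "(\<lambda>n. real n * (t n)\<^sup>2 * \<bar>t n\<bar>) \<longlonglongrightarrow> c * 0"
    by (intro tendsto_mult assms tendsto_rabs_zero)
  moreover have "real n * (t n)\<^sup>2 * \<bar>t n\<bar> = real n * \<bar>t n\<bar> ^ 3" for n
    by (simp add: power2_eq_square power3_eq_cube abs_mult_self_eq)
  ultimately show "(\<lambda>n. real n * \<bar>t n\<bar> ^ 3) \<longlonglongrightarrow> 0"
    by simp
qed

lemma n_over_VX_da_tendsto: "(\<lambda>n. real n / VX_da (Suc n)) \<longlonglongrightarrow> 108 / 5"
proof -
  have "(\<lambda>n. VX_da (Suc n) / real (Suc n) - 5 / 108) \<longlonglongrightarrow> 0"
  proof (rule Lim_null_comparison)
    show "eventually (\<lambda>n. norm (VX_da (Suc n) / real (Suc n) - 5 / 108) \<le> 3 / real (Suc n)) sequentially"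
      using eventually_ge_at_top[of 2]
    proof eventually_elim
      case (elim n)
      have "VX_da (Suc n) / real (Suc n) - 5 / 108 = (VX_da (Suc n) - 5 * real (Suc n) / 108) / real (Suc n)"
        by (simp add: field_simps)
      then show ?case
        using VX_da_bound[of "Suc n"] elim by (simp add: divide_right_mono)
    qed
    show "(\<lambda>n. 3 / real (Suc n)) \<longlonglongrightarrow> 0"
      using LIMSEQ_Suc[OF lim_const_over_n[of "3 :: real"]] by simp
  qed
  then have "(\<lambda>n. VX_da (Suc n) / real (Suc n)) \<longlonglongrightarrow> 5 / 108"
    by (simp add: LIM_zero_iff)
  from tendsto_divide[OF LIMSEQ_n_over_Suc_n this]
  show ?thesis
    by simp
qed

lemma eventually_VX_da_Suc_pos: "eventually (\<lambda>n. 0 < VX_da (Suc n)) sequentially"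
  using eventually_ge_at_top[of 64]
proof eventually_elim
  case (elim n)
  then have "65 \<le> real (Suc n)"
    by simp
  moreover have "5 * real (Suc n) / 108 - 3 \<le> VX_da (Suc n)"
    using VX_da_bound[of "Suc n"] elim by (simp add: abs_le_iff)
  ultimately show ?case
    by (simp add: field_simps)
qed

definition normalized_da :: "nat \<Rightarrow> real measure" where
  "normalized_da n = distr (measure_pmf (comp_pmf n)) borel (\<lambda>c. (real (da c) - EX_da n) / sqrt (VX_da n))"

lemma real_distribution_normalized_da: "real_distribution (normalized_da n)"
  unfolding normalized_da_def by (intro prob_space.real_distribution_distr prob_space_measure_pmf) simp

lemma char_normalized_da_Suc:
  fixes s :: real and n :: nat
  defines "t \<equiv> s / sqrt (VX_da (Suc n))"
  shows "char (normalized_da (Suc n)) s = iexp (- t * EX_da (Suc n)) * (2 * scaled_da_cf t (Suc n))"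
  unfolding normalized_da_def char_normalized_da card_compositions_Suc t_def[symmetric]
  by (simp add: scaled_da_cf_def)

lemma iexp_mult_approx_root_power:
  "iexp (- \<theta> * \<mu>) * approx_root \<theta> ^ n
     = exp (\<i> * of_real (\<theta> * (real n / 6 - \<mu>)) - of_real (5 / 216 * (real n * \<theta>\<^sup>2)))"
proof -
  have "iexp (- \<theta> * \<mu>) * approx_root \<theta> ^ n
      = exp (- (\<i> * of_real (\<theta> * \<mu>))) * exp (of_nat n * (\<i> * of_real \<theta> / 6 - 5 * of_real \<theta> ^ 2 / 216))"
    by (simp add: approx_root_def exp_of_nat_mult)
  also have "\<dots> = exp (\<i> * of_real (\<theta> * (real n / 6 - \<mu>)) - of_real (5 / 216 * (real n * \<theta>\<^sup>2)))"
    unfolding exp_add[symmetric] by (simp add: algebra_simps)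
  finally show ?thesis .
qed

lemma n_mult_square_normalizer_tendsto:
  "(\<lambda>n. real n * (s / sqrt (VX_da (Suc n)))\<^sup>2) \<longlonglongrightarrow> 108 / 5 * s\<^sup>2"
proof -
  have "(\<lambda>n. s\<^sup>2 * (real n / VX_da (Suc n))) \<longlonglongrightarrow> s\<^sup>2 * (108 / 5)"
    by (intro tendsto_mult tendsto_const n_over_VX_da_tendsto)
  moreover have "eventually (\<lambda>n. s\<^sup>2 * (real n / VX_da (Suc n)) = real n * (s / sqrt (VX_da (Suc n)))\<^sup>2)
      sequentially"
    using eventually_VX_da_Suc_pos by eventually_elim (simp add: power_divide)
  ultimately show ?thesis
    by (simp add: Lim_transform_eventually mult.commute)
qed

lemma mult_EX_da_deviation_tendsto:
  assumes "t \<longlonglongrightarrow> 0"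
  shows "(\<lambda>n. t n * (real n / 6 - EX_da (Suc n))) \<longlonglongrightarrow> 0"
proof (rule Lim_null_comparison)
  show "eventually (\<lambda>n. norm (t n * (real n / 6 - EX_da (Suc n))) \<le> 7 / 6 * \<bar>t n\<bar>) sequentially"
    using eventually_ge_at_top[of 2]
  proof eventually_elim
    case (elim n)
    have "\<bar>real n / 6 - EX_da (Suc n)\<bar> \<le> 7 / 6"
      using EX_da_bound[of "Suc n"] elim by (simp add: abs_le_iff field_simps)
    then have "\<bar>t n\<bar> * \<bar>real n / 6 - EX_da (Suc n)\<bar> \<le> \<bar>t n\<bar> * (7 / 6)"
      by (intro mult_left_mono) auto
    then show ?case
      by (simp add: abs_mult)
  qed
  show "(\<lambda>n. 7 / 6 * \<bar>t n\<bar>) \<longlonglongrightarrow> 0"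
    using tendsto_mult[OF tendsto_const tendsto_rabs_zero[OF assms], of "7 / 6"] by simp
qed

lemma char_normalized_da_approx:
  fixes s :: real and n :: nat
  defines "t \<equiv> s / sqrt (VX_da (Suc n))"
  assumes "\<bar>t\<bar> \<le> 1 / 48"
  shows "norm (char (normalized_da (Suc n)) s
           - exp (\<i> * of_real (t * (real n / 6 - EX_da (Suc n))) - of_real (5 / 216 * (real n * t\<^sup>2))))
         \<le> 2 * (12 * \<bar>t\<bar> + 6 * (real n * \<bar>t\<bar> ^ 3))"
proof -
  have "char (normalized_da (Suc n)) s
        - exp (\<i> * of_real (t * (real n / 6 - EX_da (Suc n))) - of_real (5 / 216 * (real n * t\<^sup>2)))
      = iexp (- t * EX_da (Suc n)) * (2 * (scaled_da_cf t (n + 1) - approx_root t ^ n / 2))"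
    unfolding char_normalized_da_Suc iexp_mult_approx_root_power[symmetric] t_def
    by (simp add: algebra_simps)
  then have "norm (char (normalized_da (Suc n)) s
        - exp (\<i> * of_real (t * (real n / 6 - EX_da (Suc n))) - of_real (5 / 216 * (real n * t\<^sup>2))))
      = 2 * norm (scaled_da_cf t (n + 1) - approx_root t ^ n / 2)"
    by (simp only: norm_mult) simp
  then show ?thesis
    using scaled_da_cf_approx[OF assms(2), of n] by simp
qed

lemma char_normalized_da_tendsto:
  "(\<lambda>n. char (normalized_da (Suc n)) s) \<longlonglongrightarrow> char std_normal_distribution s"
proof -
  define t where "t n = s / sqrt (VX_da (Suc n))" for n
  define Z where "Z n = \<i> * of_real (t n * (real n / 6 - EX_da (Suc n))) - of_real (5 / 216 * (real n * (t n)\<^sup>2))"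
    for n
  have nt2: "(\<lambda>n. real n * (t n)\<^sup>2) \<longlonglongrightarrow> 108 / 5 * s\<^sup>2"
    unfolding t_def by (rule n_mult_square_normalizer_tendsto)
  note t_0 = n_mult_square_tendsto_imp(1)[OF nt2]
    and nt3 = n_mult_square_tendsto_imp(2)[OF nt2]
  have "(\<lambda>n. char (normalized_da (Suc n)) s - exp (Z n)) \<longlonglongrightarrow> 0"
  proof (rule Lim_null_comparison)
    have "eventually (\<lambda>n. \<bar>t n\<bar> < 1 / 48) sequentially"
      using tendsto_rabs_zero[OF t_0] by (rule order_tendstoD) simp
    then show "eventually (\<lambda>n. norm (char (normalized_da (Suc n)) s - exp (Z n))
        \<le> 2 * (12 * \<bar>t n\<bar> + 6 * (real n * \<bar>t n\<bar> ^ 3))) sequentially"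
    proof eventually_elim
      case (elim n)
      then show ?case
        using char_normalized_da_approx[of s n] by (simp add: t_def Z_def)
    qed
    show "(\<lambda>n. 2 * (12 * \<bar>t n\<bar> + 6 * (real n * \<bar>t n\<bar> ^ 3))) \<longlonglongrightarrow> 0"
      using tendsto_mult[OF tendsto_const tendsto_add[OF tendsto_mult[OF tendsto_const tendsto_rabs_zero[OF t_0]]
          tendsto_mult[OF tendsto_const nt3]], of 2 12 6] by simp
  qed
  moreover have "Z \<longlonglongrightarrow> - complex_of_real (s\<^sup>2 / 2)"
  proof -
    have "Z \<longlonglongrightarrow> \<i> * of_real 0 - of_real (5 / 216 * (108 / 5 * s\<^sup>2))"
      unfolding Z_def
      by (intro tendsto_diff tendsto_mult_left tendsto_of_real mult_EX_da_deviation_tendsto t_0 nt2)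
    then show ?thesis
      by simp
  qed
  then have "(\<lambda>n. exp (Z n)) \<longlonglongrightarrow> exp (- complex_of_real (s\<^sup>2 / 2))"
    by (intro tendsto_intros)
  ultimately have "(\<lambda>n. (char (normalized_da (Suc n)) s - exp (Z n)) + exp (Z n))
      \<longlonglongrightarrow> 0 + exp (- complex_of_real (s\<^sup>2 / 2))"
    by (intro tendsto_add)
  then show ?thesis
    by (simp add: char_std_normal_distribution exp_of_real[symmetric])
qed

theorem corollary2p3:
  shows "weak_conv_m
           (\<lambda>n. distr (measure_pmf (comp_pmf (Suc n))) borel
                   (\<lambda>c. (real (da c) - EX_da (Suc n)) / sqrt (VX_da (Suc n))))
           std_normal_distribution
         \<and> (\<lambda>n. EX_da n - real n / 6) \<in> O(\<lambda>_. 1)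
         \<and> (\<lambda>n. VX_da n - 5 * real n / 108) \<in> O(\<lambda>_. 1)"
proof (intro conjI)
  have "weak_conv_m (\<lambda>n. normalized_da (Suc n)) std_normal_distribution"
    by (rule levy_continuity[OF real_distribution_normalized_da real_dist_normal_dist
          char_normalized_da_tendsto])
  then show "weak_conv_m
           (\<lambda>n. distr (measure_pmf (comp_pmf (Suc n))) borel
                   (\<lambda>c. (real (da c) - EX_da (Suc n)) / sqrt (VX_da (Suc n))))
           std_normal_distribution"
    unfolding normalized_da_def .
  show "(\<lambda>n. EX_da n - real n / 6) \<in> O(\<lambda>_. 1)"
    by (intro bigoI[where c = 1] eventually_mono[OF eventually_ge_at_top[of 3]]) (simp add: EX_da_bound)
  show "(\<lambda>n. VX_da n - 5 * real n / 108) \<in> O(\<lambda>_. 1)"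
    by (intro bigoI[where c = 3] eventually_mono[OF eventually_ge_at_top[of 3]]) (simp add: VX_da_bound)
qed

end
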